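(* (1) Let $R\subseteq S$ be rings with $S$ a free left $R$-module on a basis $T_S$, let $\alpha$ be a ring automorphism of $S$ and $\delta$ an $\alpha$-derivation of $S$, and let $S[x;\alpha,\delta]$ be the Ore extension. Let $0\ne g\in S[x;\alpha,\delta]$ and $p=\operatorname{lc}_S(g)$. Suppose that $p$ is $R$-nice and $\operatorname{ann}_R(p)=\operatorname{ann}_R(g)$ (this holds in particular whenever $g$ is $R$-nice), and that $\operatorname{ann}_S(p)=S\operatorname{ann}_R(p)$. Then $\operatorname{ann}_{S[x;\alpha,\delta]}(g)=S[x;\alpha,\delta]\operatorname{ann}_R(g)$. (2) Let $\mathbb S=R[X;\boldsymbol\alpha,\boldsymbol\delta]$ be a skew polynomial ring of bijective type over a well-ordered set of variables. Then every $R$-nice element $g\in\mathbb S$ satisfies $\operatorname{ann}_{\mathbb S}(g)=\mathbb S\operatorname{ann}_R(g)$.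
   Context: All annihilators are left annihilators: $\operatorname{ann}_B(u)=\{b\in B: bu=0\}$. Ore extension: $S[x;\alpha,\delta]$ is the free left $S$-module with basis $\{x^n:n\in\mathbb N\}$ and multiplication determined by $xs=\alpha(s)x+\delta(s)$, where $\delta(ab)=\alpha(a)\delta(b)+\delta(a)b$. Each $f\in S[x;\alpha,\delta]$ is uniquely $f=\sum_k p_kx^k$ with $p_k\in S$; $\deg_x(f)$ is the largest $k$ with $p_k\ne0$ and $\operatorname{lc}_S(f)=p_{\deg_x f}$. $S[x;\alpha,\delta]$ is a free left $R$-module with basis $\{\lambda x^n:\lambda\in T_S,n\in\mathbb N\}$. A non-zero element $f$ of a ring that is a free left $R$-module with a fixed basis is $R$-nice if, writing $f=\sum_i a_i\lambda_i$ with distinct basis elements $\lambda_i$ and non-zero $a_i\in R$, all the $\operatorname{ann}_R(a_i)$ coincide. Setting (M) for part (2): $R$ a ring, $\Omega$ an ordinal, $X=\{x_s:s<\Omega\}$; $T_\kappa$ the standard terms $x_{s_1}\cdots x_{s_n}$ with $s_1\le\cdots\le s_n<\kappa$, $T=T_\Omega$; $\mathbb S$ has subrings $\mathbb S_\kappa$ ($\kappa\le\Omega$) with $\mathbb S_0=R$, $\mathbb S_\Omega=\mathbb S$, $\mathbb S_\kappa$ free as left $R$-module on $T_\kappa$, $\mathbb S_{\kappa+1}=\mathbb S_\kappa[x_\kappa;\alpha_\kappa,\delta_\kappa]$ an Ore extension with $\alpha_\kappa$ an automorphism of $\mathbb S_\kappa$ and $\delta_\kappa$ an $\alpha_\kappa$-derivation,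 and $\mathbb S_\kappa=\bigcup_{\eta<\kappa}\mathbb S_\eta$ for limit $\kappa$; $R$-niceness in $\mathbb S$ refers to the basis $T$. *)

theory Defs
  imports Main
begin

text \<open>All rings live inside one ambient type of class ring_1; the rings of the paper
are subrings (subsets) of it.\<close>

definition is_subring :: "'a::ring_1 set \<Rightarrow> bool" where
  "is_subring R \<longleftrightarrow> 1 \<in> R \<and> (\<forall>a\<in>R. \<forall>b\<in>R. a + b \<in> R \<and> a - b \<in> R \<and> a * b \<in> R)"

definition ann :: "'a::ring_1 set \<Rightarrow> 'a \<Rightarrow> 'a set" where
  "ann B u = {b \<in> B. b * u = 0}"

text \<open>B X : the left ideal / left B-submodule generated by X (finite sums of products).\<close>
definition lspan :: "'a::ring_1 set \<Rightarrow> 'a set \<Rightarrow> 'a set" where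
  "lspan B X = {y. \<exists>(n::nat) s a. (\<forall>i<n. s i \<in> B \<and> a i \<in> X) \<and> y = (\<Sum>i<n. s i * a i)}"

definition is_coeffs :: "'a::ring_1 set \<Rightarrow> 'a set \<Rightarrow> ('a \<Rightarrow> 'a) \<Rightarrow> bool" where
  "is_coeffs R B c \<longleftrightarrow> finite {b. c b \<noteq> 0} \<and> (\<forall>b. c b \<noteq> 0 \<longrightarrow> b \<in> B \<and> c b \<in> R)"

definition lin_comb :: "('a::ring_1 \<Rightarrow> 'a) \<Rightarrow> 'a" where
  "lin_comb c = (\<Sum>b\<in>{b. c b \<noteq> 0}. c b * b)"

definition free_on :: "'a::ring_1 set \<Rightarrow> 'a set \<Rightarrow> 'a set \<Rightarrow> bool" where
  "free_on R M B \<longleftrightarrow> B \<subseteq> M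
     \<and> (\<forall>m. m \<in> M \<longleftrightarrow> (\<exists>c. is_coeffs R B c \<and> m = lin_comb c))
     \<and> (\<forall>c c'. is_coeffs R B c \<longrightarrow> is_coeffs R B c' \<longrightarrow> lin_comb c = lin_comb c' \<longrightarrow> c = c')"

definition coef :: "'a::ring_1 set \<Rightarrow> 'a set \<Rightarrow> 'a \<Rightarrow> 'a \<Rightarrow> 'a" where
  "coef R B m = (THE c. is_coeffs R B c \<and> m = lin_comb c)"

definition nice :: "'a::ring_1 set \<Rightarrow> 'a set \<Rightarrow> 'a set \<Rightarrow> 'a \<Rightarrow> bool" where
  "nice R M B f \<longleftrightarrow> f \<in> M \<and> f \<noteq> 0 \<and>
     (\<forall>b b'. coef R B f b \<noteq> 0 \<longrightarrow> coef R B f b' \<noteq> 0 \<longrightarrow>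
        ann R (coef R B f b) = ann R (coef R B f b'))"

definition powers :: "'a::ring_1 \<Rightarrow> 'a set" where
  "powers x = range (\<lambda>n::nat. x ^ n)"

definition ore_ext :: "'a::ring_1 set \<Rightarrow> 'a set \<Rightarrow> 'a \<Rightarrow> ('a \<Rightarrow> 'a) \<Rightarrow> ('a \<Rightarrow> 'a) \<Rightarrow> bool" where
  "ore_ext S A x \<alpha> \<delta> \<longleftrightarrow>
     is_subring S \<and> is_subring A \<and> S \<subseteq> A \<and> x \<in> A \<and>
     bij_betw \<alpha> S S \<and> \<alpha> 1 = 1 \<and>
     (\<forall>a\<in>S. \<forall>b\<in>S. \<alpha> (a + b) = \<alpha> a + \<alpha> b \<and> \<alpha> (a * b) = \<alpha> a * \<alpha> b) \<and>
     (\<forall>a\<in>S. \<delta> a \<in> S) \<and>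
     (\<forall>a\<in>S. \<forall>b\<in>S. \<delta> (a + b) = \<delta> a + \<delta> b \<and> \<delta> (a * b) = \<alpha> a * \<delta> b + \<delta> a * b) \<and>
     inj (\<lambda>n::nat. x ^ n) \<and> free_on S A (powers x) \<and>
     (\<forall>s\<in>S. x * s = \<alpha> s * x + \<delta> s)"

definition ore_deg :: "'a::ring_1 set \<Rightarrow> 'a \<Rightarrow> 'a \<Rightarrow> nat" where
  "ore_deg S x g = (GREATEST n. coef S (powers x) g (x ^ n) \<noteq> 0)"

definition ore_lc :: "'a::ring_1 set \<Rightarrow> 'a \<Rightarrow> 'a \<Rightarrow> 'a" where
  "ore_lc S x g = coef S (powers x) g (x ^ ore_deg S x g)"

definition std_terms :: "('i::linorder \<Rightarrow> 'a::ring_1) \<Rightarrow> 'i set \<Rightarrow> 'a set" where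
  "std_terms x D = {prod_list (map x xs) | xs. sorted xs \<and> set xs \<subseteq> D}"

text \<open>The ordinal Omega is represented by a well-ordered index type 'i;
  ordinals kappa < Omega by elements of 'i, S_kappa by Sk {s. s < kappa},
  S_{kappa+1} by Sk {s. s \<le> kappa}, and S_Omega by Sk UNIV.\<close>
definition skew_setting ::
  "'a::ring_1 set \<Rightarrow> ('i::wellorder \<Rightarrow> 'a) \<Rightarrow> ('i \<Rightarrow> 'a \<Rightarrow> 'a) \<Rightarrow> ('i \<Rightarrow> 'a \<Rightarrow> 'a)
     \<Rightarrow> ('i set \<Rightarrow> 'a set) \<Rightarrow> bool" where
  "skew_setting R x \<alpha> \<delta> Sk \<longleftrightarrow>
     is_subring R \<and> is_subring (Sk UNIV) \<and> Sk {} = R \<and>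
     inj_on (\<lambda>xs. prod_list (map x xs)) {xs. sorted xs} \<and>
     (\<forall>\<kappa>. free_on R (Sk {s. s < \<kappa>}) (std_terms x {s. s < \<kappa>})) \<and>
     free_on R (Sk UNIV) (std_terms x UNIV) \<and>
     (\<forall>\<kappa>. ore_ext (Sk {s. s < \<kappa>}) (Sk {s. s \<le> \<kappa>}) (x \<kappa>) (\<alpha> \<kappa>) (\<delta> \<kappa>)) \<and>
     (\<forall>\<kappa>. ((\<exists>\<eta>. \<eta> < \<kappa>) \<and> (\<forall>\<eta><\<kappa>. \<exists>\<eta>'<\<kappa>. \<eta> < \<eta>'))
            \<longrightarrow> Sk {s. s < \<kappa>} = (\<Union>\<eta>\<in>{\<eta>. \<eta> < \<kappa>}. Sk {s. s < \<eta>})) \<and>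
     ((\<forall>\<eta>::'i. \<exists>\<eta>'. \<eta> < \<eta>') \<longrightarrow> Sk UNIV = (\<Union>\<eta>. Sk {s. s < \<eta>}))"

end

theory Submission
  imports Defs
begin

(*
  For the first part, let f g = 0 where f has leading coefficient q at x^k and p = lc_S(g) sits
  at x^n. The coefficient of x^(k+n) in f g is q alpha^k(p), so q = alpha^k(q') with q' p = 0,
  i.e. q' lies in ann_S(p) = S ann_R(g). Then x^k q' lies in S[x;alpha,delta] ann_R(g) and has
  leading term q x^k, so f - x^k q' is an annihilator of g of smaller degree, and induction on
  the degree finishes.

  The R-coefficient of g at the basis element l x^n is the TS-coefficient at l of the
  S-coefficient of x^n in g; hence niceness of g passes to lc_S(g), with the same annihilator in R.

  For skew polynomial rings, argue by transfinite induction on kappa. At a successor,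
  S_(kappa+1) = S_kappa[x_kappa] and the two facts above together with the induction hypothesis
  applied to lc(g) give the claim. At a limit, an annihilator f and g already lie in a common
  earlier S_eta, where g is still nice because the bases are nested.
*)

section \<open>Subrings, free modules and left spans\<close>

lemma subring_zero: "is_subring S \<Longrightarrow> 0 \<in> S"
  unfolding is_subring_def by (metis diff_self)

lemma subring_one: "is_subring S \<Longrightarrow> 1 \<in> S"
  unfolding is_subring_def by blast

lemma subring_add: "is_subring S \<Longrightarrow> a \<in> S \<Longrightarrow> b \<in> S \<Longrightarrow> a + b \<in> S"
  unfolding is_subring_def by blast

lemma subring_diff: "is_subring S \<Longrightarrow> a \<in> S \<Longrightarrow> b \<in> S \<Longrightarrow> a - b \<in> S"
  unfolding is_subring_def by blast

lemma subring_mult: "is_subring S \<Longrightarrow> a \<in> S \<Longrightarrow> b \<in> S \<Longrightarrow> a * b \<in> S"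
  unfolding is_subring_def by blast

lemma subring_uminus: "is_subring S \<Longrightarrow> a \<in> S \<Longrightarrow> - a \<in> S"
  using subring_diff[of S 0 a] subring_zero[of S] by simp

lemma subring_power: "is_subring S \<Longrightarrow> a \<in> S \<Longrightarrow> a ^ n \<in> S"
  by (induction n) (auto intro: subring_one subring_mult)

lemma subring_sum: "is_subring S \<Longrightarrow> (\<And>i. i \<in> I \<Longrightarrow> f i \<in> S) \<Longrightarrow> sum f I \<in> S"
  by (induction I rule: infinite_finite_induct) (auto intro: subring_zero subring_add)

lemma lin_comb_eq_sum:
  assumes "finite F" "{b. c b \<noteq> 0} \<subseteq> F"
  shows "lin_comb c = (\<Sum>b\<in>F. c b * b)"
  unfolding lin_comb_def by (rule sum.mono_neutral_left) (use assms in auto)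

lemma lin_comb_zero: "lin_comb (\<lambda>_. 0) = 0"
  unfolding lin_comb_def by simp

lemma is_coeffs_zero: "is_coeffs R B (\<lambda>_. 0)"
  unfolding is_coeffs_def by simp

lemma free_on_coef:
  assumes "free_on R M B" "m \<in> M"
  shows "is_coeffs R B (coef R B m)" and "m = lin_comb (coef R B m)"
proof -
  from assms obtain c where c: "is_coeffs R B c" "m = lin_comb c"
    unfolding free_on_def by blast
  have uniq: "\<And>c'. is_coeffs R B c' \<and> m = lin_comb c' \<Longrightarrow> c' = c"
    using assms(1) c unfolding free_on_def by metis
  have "coef R B m = c"
    unfolding coef_def by (rule the_equality) (use c uniq in blast)+
  then show "is_coeffs R B (coef R B m)" "m = lin_comb (coef R B m)"
    using c by simp_all
qed

lemma coef_lin_comb: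
  assumes "free_on R M B" "is_coeffs R B c"
  shows "coef R B (lin_comb c) = c"
proof -
  have "lin_comb c \<in> M" using assms unfolding free_on_def by blast
  from free_on_coef[OF assms(1) this] show ?thesis
    using assms unfolding free_on_def by metis
qed

lemma coef_zero: "free_on R M B \<Longrightarrow> coef R B 0 = (\<lambda>_. 0)"
  using coef_lin_comb[OF _ is_coeffs_zero] by (simp add: lin_comb_zero)

lemma coef_basis_mono:
  assumes "free_on R M B" "free_on R M' B'" "B \<subseteq> B'" "m \<in> M"
  shows "coef R B' m = coef R B m"
proof -
  have "is_coeffs R B' (coef R B m)"
    using free_on_coef(1)[OF assms(1,4)] assms(3) unfolding is_coeffs_def by blast
  from coef_lin_comb[OF assms(2) this] show ?thesis
    using free_on_coef(2)[OF assms(1,4)] by simp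
qed

lemma nice_basis_mono:
  assumes "free_on R M B" "free_on R M' B'" "B \<subseteq> B'" "M \<subseteq> M'" "m \<in> M"
  shows "nice R M' B' m \<longleftrightarrow> nice R M B m"
  unfolding nice_def using coef_basis_mono[OF assms(1-3,5)] assms(4,5) by auto

lemma subset_free_on_if_one_in_basis:
  assumes "free_on R M B" "1 \<in> B"
  shows "R \<subseteq> M"
proof
  fix r assume r: "r \<in> R"
  define c where "c = (\<lambda>b::'a. if b = 1 then r else 0)"
  have "is_coeffs R B c" unfolding is_coeffs_def c_def using r assms(2) by auto
  moreover have "lin_comb c = r" by (subst lin_comb_eq_sum[of "{1}"]) (auto simp: c_def)
  ultimately show "r \<in> M" using assms(1) unfolding free_on_def by metis
qed

lemma free_on_mult_eq_0_iff:
  assumes R: "is_subring R" and F: "free_on R M B" and m: "m \<in> M" and r: "r \<in> R"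
  shows "r * m = 0 \<longleftrightarrow> (\<forall>b. r * coef R B m b = 0)"
proof -
  define c where "c = coef R B m"
  have c: "is_coeffs R B c" "m = lin_comb c"
    using free_on_coef[OF F m] unfolding c_def by auto
  have fin: "finite {b. c b \<noteq> 0}" using c(1) unfolding is_coeffs_def by blast
  have "{b. r * c b \<noteq> 0} \<subseteq> {b. c b \<noteq> 0}" by auto
  then have rc: "is_coeffs R B (\<lambda>b. r * c b)"
    using c(1) R r finite_subset[OF _ fin] unfolding is_coeffs_def
    by (auto intro!: subring_mult)
  have "r * m = (\<Sum>b\<in>{b. c b \<noteq> 0}. (r * c b) * b)"
    using c(2) unfolding lin_comb_def by (simp add: sum_distrib_left mult.assoc)
  also have "\<dots> = lin_comb (\<lambda>b. r * c b)"
    by (rule lin_comb_eq_sum[symmetric]) (use fin in auto)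
  finally have "r * m = lin_comb (\<lambda>b. r * c b)" .
  moreover have "lin_comb (\<lambda>b. r * c b) = 0 \<longleftrightarrow> (\<lambda>b. r * c b) = (\<lambda>_. 0)"
    using F rc is_coeffs_zero lin_comb_zero unfolding free_on_def by metis
  ultimately show ?thesis unfolding c_def by (auto simp: fun_eq_iff)
qed

lemma nice_coef_nonzero:
  assumes "free_on R M B" "nice R M B m"
  obtains b where "coef R B m b \<noteq> 0"
proof -
  have "m = lin_comb (coef R B m)" "m \<noteq> 0"
    using free_on_coef(2)[OF assms(1)] assms(2) unfolding nice_def by auto
  then show ?thesis using that lin_comb_zero by (metis ext)
qed

lemma ann_nice_eq_ann_coef:
  assumes R: "is_subring R" and F: "free_on R M B" and n: "nice R M B m"
    and b: "coef R B m b \<noteq> 0"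
  shows "ann R m = ann R (coef R B m b)"
proof -
  have m: "m \<in> M" using n unfolding nice_def by blast
  have "r * m = 0 \<longleftrightarrow> r * coef R B m b = 0" if r: "r \<in> R" for r
  proof -
    have "r * coef R B m b' = 0" if "r * coef R B m b = 0" for b'
    proof (cases "coef R B m b' = 0")
      case False
      then have "ann R (coef R B m b') = ann R (coef R B m b)"
        using n b unfolding nice_def by blast
      then show ?thesis using that r unfolding ann_def by auto
    qed simp
    then show ?thesis using free_on_mult_eq_0_iff[OF R F m r] by auto
  qed
  then show ?thesis unfolding ann_def by auto
qed

lemma coef_sum_basis:
  assumes "free_on R M B" "finite L" "L \<subseteq> B" "\<And>b. b \<in> L \<Longrightarrow> e b \<in> R"
  shows "coef R B (\<Sum>b'\<in>L. e b' * b') b = (if b \<in> L then e b else 0)"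
proof -
  define c where "c = (\<lambda>b. if b \<in> L then e b else 0)"
  have "{b. c b \<noteq> 0} \<subseteq> L" unfolding c_def by auto
  then have "is_coeffs R B c"
    unfolding is_coeffs_def using assms(2-4) finite_subset[of _ L] by (auto simp: c_def)
  moreover have "lin_comb c = (\<Sum>b'\<in>L. e b' * b')"
    by (subst lin_comb_eq_sum[OF assms(2)]) (auto simp: c_def)
  ultimately have "coef R B (\<Sum>b'\<in>L. e b' * b') = c"
    using coef_lin_comb[OF assms(1)] by metis
  then show ?thesis unfolding c_def by simp
qed

definition lin_combs :: "'a::ring_1 set \<Rightarrow> 'a set \<Rightarrow> 'a set" where
  "lin_combs R B = {lin_comb c | c. is_coeffs R B c}"

lemma in_lin_combsI: "is_coeffs R B c \<Longrightarrow> u = lin_comb c \<Longrightarrow> u \<in> lin_combs R B"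
  unfolding lin_combs_def by blast

lemma zero_in_lin_combs: "0 \<in> lin_combs R B"
  using in_lin_combsI[OF is_coeffs_zero] lin_comb_zero by metis

lemma lin_combs_add:
  assumes R: "is_subring R" and "u \<in> lin_combs R B" "v \<in> lin_combs R B"
  shows "u + v \<in> lin_combs R B"
proof -
  obtain c c' where c: "is_coeffs R B c" "u = lin_comb c" and c': "is_coeffs R B c'" "v = lin_comb c'"
    using assms(2,3) unfolding lin_combs_def by blast
  define F where "F = {b. c b \<noteq> 0} \<union> {b. c' b \<noteq> 0}"
  have F: "finite F" using c(1) c'(1) unfolding F_def is_coeffs_def by blast
  have supp: "{b. c b + c' b \<noteq> 0} \<subseteq> F" unfolding F_def by auto
  have in_R: "c b \<in> R" "c' b \<in> R" for b
    using c(1) c'(1) subring_zero[OF R] unfolding is_coeffs_def by metis+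
  have "is_coeffs R B (\<lambda>b. c b + c' b)"
    unfolding is_coeffs_def
  proof (intro conjI allI impI)
    show "finite {b. c b + c' b \<noteq> 0}" using finite_subset[OF supp F] .
  next
    fix b assume "c b + c' b \<noteq> 0"
    then have "c b \<noteq> 0 \<or> c' b \<noteq> 0" by auto
    then show "b \<in> B" using c(1) c'(1) unfolding is_coeffs_def by blast
    show "c b + c' b \<in> R" using subring_add[OF R in_R] .
  qed
  moreover have "lin_comb (\<lambda>b. c b + c' b) = u + v"
  proof -
    have "lin_comb (\<lambda>b. c b + c' b) = (\<Sum>b\<in>F. (c b + c' b) * b)"
      by (rule lin_comb_eq_sum[OF F supp])
    also have "\<dots> = (\<Sum>b\<in>F. c b * b) + (\<Sum>b\<in>F. c' b * b)"
      by (simp add: distrib_right sum.distrib)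
    also have "\<dots> = u + v"
      using lin_comb_eq_sum[OF F, of c] lin_comb_eq_sum[OF F, of c'] c(2) c'(2)
      unfolding F_def by auto
    finally show ?thesis .
  qed
  ultimately show ?thesis by (rule in_lin_combsI[OF _ sym])
qed

lemma mult_basis_in_lin_combs:
  assumes "r \<in> R" "b \<in> B"
  shows "r * b \<in> lin_combs R B"
proof -
  define c where "c = (\<lambda>b'. if b' = b then r else 0)"
  have "is_coeffs R B c" unfolding is_coeffs_def c_def using assms by auto
  moreover have "lin_comb c = r * b" by (subst lin_comb_eq_sum[of "{b}"]) (auto simp: c_def)
  ultimately show ?thesis by (rule in_lin_combsI[OF _ sym])
qed

lemma sum_in_lin_combs:
  "is_subring R \<Longrightarrow> (\<And>i. i \<in> I \<Longrightarrow> f i \<in> lin_combs R B) \<Longrightarrow> sum f I \<in> lin_combs R B"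
  by (induction I rule: infinite_finite_induct) (auto intro: zero_in_lin_combs lin_combs_add)

lemma sum_lessThan_add: "(\<Sum>i<n + m. f i) = (\<Sum>i<n. f i) + (\<Sum>i<m. f (n + i :: nat))"
  by (induction m) (simp_all add: add.assoc)

lemma lspan_zero: "0 \<in> lspan B X"
  unfolding lspan_def by (rule CollectI, rule exI[of _ 0]) simp

lemma lspan_mult_mem: "s \<in> B \<Longrightarrow> a \<in> X \<Longrightarrow> s * a \<in> lspan B X"
  unfolding lspan_def
  by (rule CollectI, rule exI[of _ 1], rule exI[of _ "\<lambda>_. s"], rule exI[of _ "\<lambda>_. a"]) simp

lemma lspan_add:
  assumes "u \<in> lspan B X" "v \<in> lspan B X"
  shows "u + v \<in> lspan B X"
proof -
  from assms(1) obtain n :: nat and s a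
    where u: "\<forall>i<n. s i \<in> B \<and> a i \<in> X" "u = (\<Sum>i<n. s i * a i)"
    unfolding lspan_def by blast
  from assms(2) obtain m :: nat and t b
    where v: "\<forall>i<m. t i \<in> B \<and> b i \<in> X" "v = (\<Sum>i<m. t i * b i)"
    unfolding lspan_def by blast
  define s' where "s' = (\<lambda>i. if i < n then s i else t (i - n))"
  define a' where "a' = (\<lambda>i. if i < n then a i else b (i - n))"
  have "u + v = (\<Sum>i<n + m. s' i * a' i)"
    using u v by (simp add: sum_lessThan_add s'_def a'_def)
  moreover have "\<forall>i<n + m. s' i \<in> B \<and> a' i \<in> X"
    using u v by (auto simp: s'_def a'_def)
  ultimately show ?thesis unfolding lspan_def by blast
qed

lemma lspan_mono: "B \<subseteq> B' \<Longrightarrow> lspan B X \<subseteq> lspan B' X"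
  unfolding lspan_def by blast

lemma lspan_left_mult:
  assumes "is_subring A" "S \<subseteq> A" "t \<in> A" "u \<in> lspan S X"
  shows "t * u \<in> lspan A X"
proof -
  from assms(4) obtain n :: nat and s a
    where u: "\<forall>i<n. s i \<in> S \<and> a i \<in> X" "u = (\<Sum>i<n. s i * a i)"
    unfolding lspan_def by blast
  have "t * u = (\<Sum>i<n. (t * s i) * a i)"
    using u by (simp add: sum_distrib_left mult.assoc)
  moreover have "\<forall>i<n. t * s i \<in> A \<and> a i \<in> X"
    using u assms by (auto intro: subring_mult)
  ultimately show ?thesis unfolding lspan_def
    by (intro CollectI exI[of _ n] exI[of _ "\<lambda>i. t * s i"] exI[of _ a]) auto
qed

lemma lspan_ann_subset:
  assumes "is_subring M" "R \<subseteq> M"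
  shows "lspan M (ann R g) \<subseteq> ann M g"
proof
  fix y assume "y \<in> lspan M (ann R g)"
  then obtain n :: nat and s a
    where y: "\<forall>i<n. s i \<in> M \<and> a i \<in> ann R g" "y = (\<Sum>i<n. s i * a i)"
    unfolding lspan_def by blast
  have "y \<in> M" using y assms unfolding ann_def by (auto intro!: subring_sum subring_mult)
  moreover have "y * g = 0" using y unfolding ann_def by (simp add: sum_distrib_right mult.assoc)
  ultimately show "y \<in> ann M g" unfolding ann_def by simp
qed

lemma ann_eq_lspan_ann_iff:
  assumes "is_subring M" "R \<subseteq> M"
  shows "ann M g = lspan M (ann R g) \<longleftrightarrow> ann M g \<subseteq> lspan M (ann R g)"
  using lspan_ann_subset[OF assms] by blast

section \<open>Ore extensions\<close>

locale ore =
  fixes S A :: "'a::ring_1 set" and x :: 'a and \<alpha> \<delta> :: "'a \<Rightarrow> 'a"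
  assumes ore_ext: "ore_ext S A x \<alpha> \<delta>"
begin

lemma subring_S: "is_subring S"
  and subring_A: "is_subring A"
  and S_subset_A: "S \<subseteq> A"
  and x_in_A: "x \<in> A"
  and bij_\<alpha>: "bij_betw \<alpha> S S"
  and \<alpha>_add: "\<And>a b. a \<in> S \<Longrightarrow> b \<in> S \<Longrightarrow> \<alpha> (a + b) = \<alpha> a + \<alpha> b"
  and \<alpha>_mult: "\<And>a b. a \<in> S \<Longrightarrow> b \<in> S \<Longrightarrow> \<alpha> (a * b) = \<alpha> a * \<alpha> b"
  and \<delta>_in_S: "\<And>a. a \<in> S \<Longrightarrow> \<delta> a \<in> S"
  and inj_x_power: "inj (\<lambda>n::nat. x ^ n)"
  and free_on_powers: "free_on S A (powers x)"
  and x_mult: "\<And>s. s \<in> S \<Longrightarrow> x * s = \<alpha> s * x + \<delta> s"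
  using ore_ext unfolding ore_ext_def by auto

lemma x_power_in_A: "x ^ n \<in> A"
  using subring_power[OF subring_A x_in_A] .

lemma one_neq_zero: "(1::'a) \<noteq> 0"
proof
  assume "(1::'a) = 0"
  then have "x ^ (0::nat) = x ^ 1" by (metis mult_1 mult_zero_left)
  then show False using injD[OF inj_x_power] by fastforce
qed

lemma \<alpha>_funpow_bij: "bij_betw (\<alpha> ^^ k) S S"
  using bij_betw_funpow[OF bij_\<alpha>] .

lemma \<alpha>_funpow_in_S: "a \<in> S \<Longrightarrow> (\<alpha> ^^ k) a \<in> S"
  using bij_betw_apply[OF \<alpha>_funpow_bij] .

lemma \<alpha>_funpow_zero: "(\<alpha> ^^ k) 0 = 0"
proof (induction k)
  case (Suc k)
  have "\<alpha> 0 + \<alpha> 0 = \<alpha> 0" using \<alpha>_add[of 0 0] subring_zero[OF subring_S] by simp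
  then show ?case using Suc by simp
qed simp

lemma \<alpha>_funpow_mult: "a \<in> S \<Longrightarrow> b \<in> S \<Longrightarrow> (\<alpha> ^^ k) (a * b) = (\<alpha> ^^ k) a * (\<alpha> ^^ k) b"
  by (induction k) (auto simp: \<alpha>_mult \<alpha>_funpow_in_S)

definition coeff :: "'a \<Rightarrow> nat \<Rightarrow> 'a" where
  "coeff u n = coef S (powers x) u (x ^ n)"

lemma coeff_zero: "coeff 0 n = 0"
  unfolding coeff_def coef_zero[OF free_on_powers] ..

lemma coeff_sum:
  assumes s: "\<And>j. s j \<in> S"
  shows "coeff (\<Sum>j<N. s j * x ^ j) n = (if n < N then s n else 0)"
proof -
  let ?h = "\<lambda>j::nat. x ^ j"
  have inj: "inj_on ?h {..<N}" by (rule inj_on_subset[OF inj_x_power]) simp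
  define c where "c = (\<lambda>b. if b \<in> ?h ` {..<N} then s (inv_into {..<N} ?h b) else 0)"
  have c_x_power: "c (x ^ j) = (if j < N then s j else 0)" for j
  proof (cases "j < N")
    case True
    then show ?thesis using inv_into_f_f[OF inj, of j] unfolding c_def by simp
  next
    case False
    then have "x ^ j \<notin> ?h ` {..<N}" using injD[OF inj_x_power] by fastforce
    then show ?thesis using False unfolding c_def by simp
  qed
  have supp: "{b. c b \<noteq> 0} \<subseteq> ?h ` {..<N}" unfolding c_def by auto
  have "is_coeffs S (powers x) c"
    unfolding is_coeffs_def
  proof (intro conjI allI impI)
    show "finite {b. c b \<noteq> 0}" using finite_subset[OF supp] by blast
  next
    fix b assume "c b \<noteq> 0"
    then show "b \<in> powers x" using supp unfolding powers_def by blast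
    show "c b \<in> S" using s subring_zero[OF subring_S] by (simp add: c_def)
  qed
  moreover have "lin_comb c = (\<Sum>j<N. s j * x ^ j)"
  proof -
    have "lin_comb c = (\<Sum>b\<in>?h ` {..<N}. c b * b)" by (rule lin_comb_eq_sum) (use supp in auto)
    also have "\<dots> = (\<Sum>j<N. c (x ^ j) * x ^ j)" by (subst sum.reindex[OF inj]) simp
    also have "\<dots> = (\<Sum>j<N. s j * x ^ j)" by (rule sum.cong) (auto simp: c_x_power)
    finally show ?thesis .
  qed
  ultimately have "coef S (powers x) (\<Sum>j<N. s j * x ^ j) = c"
    using coef_lin_comb[OF free_on_powers] by metis
  then show ?thesis unfolding coeff_def using c_x_power by simp
qed

lemma coeff_in_S:
  assumes "u \<in> A"
  shows "coeff u n \<in> S"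
proof (cases "coeff u n = 0")
  case False
  then show ?thesis
    using free_on_coef(1)[OF free_on_powers assms] unfolding coeff_def is_coeffs_def by blast
qed (simp add: subring_zero[OF subring_S])

lemma ore_expansion:
  assumes u: "u \<in> A"
  obtains N where "\<forall>n\<ge>N. coeff u n = 0" and "u = (\<Sum>j<N. coeff u j * x ^ j)"
proof -
  let ?h = "\<lambda>j::nat. x ^ j"
  define c where "c = coef S (powers x) u"
  have c: "is_coeffs S (powers x) c" "u = lin_comb c"
    using free_on_coef[OF free_on_powers u] unfolding c_def by auto
  have fin: "finite {b. c b \<noteq> 0}" and c_powers: "\<And>b. c b \<noteq> 0 \<Longrightarrow> b \<in> powers x"
    using c(1) unfolding is_coeffs_def by auto
  have "finite (?h -` {b. c b \<noteq> 0})" by (rule finite_vimageI[OF fin inj_x_power])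
  then obtain N where N: "\<forall>j\<in>?h -` {b. c b \<noteq> 0}. j < N"
    using finite_nat_set_iff_bounded by blast
  have vanish: "\<forall>n\<ge>N. coeff u n = 0"
  proof (intro allI impI)
    fix n assume "N \<le> n"
    then have "n \<notin> ?h -` {b. c b \<noteq> 0}" using N leD by blast
    then show "coeff u n = 0" unfolding coeff_def c_def by simp
  qed
  have supp: "{b. c b \<noteq> 0} \<subseteq> ?h ` {..<N}"
  proof
    fix b assume b: "b \<in> {b. c b \<noteq> 0}"
    then obtain j where j: "b = x ^ j" using c_powers unfolding powers_def by blast
    then have "j < N" using N b by simp
    then show "b \<in> ?h ` {..<N}" using j by blast
  qed
  have inj: "inj_on ?h {..<N}" by (rule inj_on_subset[OF inj_x_power]) simp
  have "u = (\<Sum>b\<in>?h ` {..<N}. c b * b)" using c(2) lin_comb_eq_sum[OF _ supp] by simp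
  also have "\<dots> = (\<Sum>j<N. coeff u j * x ^ j)"
    by (subst sum.reindex[OF inj]) (simp add: coeff_def c_def)
  finally show ?thesis using that vanish by blast
qed

definition deg_less :: "nat \<Rightarrow> 'a set" where
  "deg_less k = {u. \<exists>s. (\<forall>j. s j \<in> S) \<and> u = (\<Sum>j<k. s j * x ^ j)}"

lemma deg_less_0: "deg_less 0 = {0}"
  unfolding deg_less_def using subring_zero[OF subring_S] by auto

lemma zero_in_deg_less: "0 \<in> deg_less k"
  unfolding deg_less_def using subring_zero[OF subring_S] by (auto intro!: exI[of _ "\<lambda>_. 0"])

lemma deg_less_add:
  assumes "u \<in> deg_less k" "v \<in> deg_less k"
  shows "u + v \<in> deg_less k"
proof -
  from assms obtain s t where "\<forall>j. s j \<in> S" "u = (\<Sum>j<k. s j * x ^ j)"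
    "\<forall>j. t j \<in> S" "v = (\<Sum>j<k. t j * x ^ j)" unfolding deg_less_def by blast
  then show ?thesis unfolding deg_less_def
    by (intro CollectI exI[of _ "\<lambda>j. s j + t j"])
      (auto simp: distrib_right sum.distrib intro: subring_add[OF subring_S])
qed

lemma deg_less_left_mult:
  assumes "c \<in> S" "u \<in> deg_less k"
  shows "c * u \<in> deg_less k"
proof -
  from assms obtain s where "\<forall>j. s j \<in> S" "u = (\<Sum>j<k. s j * x ^ j)"
    unfolding deg_less_def by blast
  then show ?thesis unfolding deg_less_def using assms(1)
    by (intro CollectI exI[of _ "\<lambda>j. c * s j"])
      (auto simp: sum_distrib_left mult.assoc intro: subring_mult[OF subring_S])
qed

lemma deg_less_diff: "u \<in> deg_less k \<Longrightarrow> v \<in> deg_less k \<Longrightarrow> u - v \<in> deg_less k"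
  using deg_less_add[of u k "(- 1) * v"] deg_less_left_mult[of "- 1" v k]
    subring_uminus[OF subring_S subring_one[OF subring_S]] by simp

lemma monomial_in_deg_less:
  assumes "c \<in> S" "j < k"
  shows "c * x ^ j \<in> deg_less k"
proof -
  define t where "t = (\<lambda>i. if i = j then c else 0)"
  have "(\<Sum>i<k. t i * x ^ i) = (\<Sum>i<k. if i = j then c * x ^ j else 0)"
    by (rule sum.cong) (auto simp: t_def)
  also have "\<dots> = c * x ^ j" using assms(2) by simp
  finally have "(\<Sum>i<k. t i * x ^ i) = c * x ^ j" .
  then show ?thesis unfolding deg_less_def using assms(1) subring_zero[OF subring_S]
    by (intro CollectI exI[of _ t]) (auto simp: t_def)
qed

lemma deg_less_mono:
  assumes "k \<le> k'" "u \<in> deg_less k"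
  shows "u \<in> deg_less k'"
proof -
  from assms(2) obtain s where s: "\<forall>j. s j \<in> S" "u = (\<Sum>j<k. s j * x ^ j)"
    unfolding deg_less_def by blast
  have "u \<in> deg_less k'" if "\<forall>j<k. s j * x ^ j \<in> deg_less k'"
    using that unfolding s(2) by (induction k) (auto intro: deg_less_add zero_in_deg_less)
  then show ?thesis using monomial_in_deg_less s(1) assms(1) by auto
qed

lemma deg_less_SucE:
  assumes "u \<in> deg_less (Suc k)"
  obtains c v where "c \<in> S" "v \<in> deg_less k" "u = c * x ^ k + v"
proof -
  from assms obtain s where s: "\<forall>j. s j \<in> S" "u = (\<Sum>j<Suc k. s j * x ^ j)"
    unfolding deg_less_def by blast
  then have "(\<Sum>j<k. s j * x ^ j) \<in> deg_less k" "u = s k * x ^ k + (\<Sum>j<k. s j * x ^ j)"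
    unfolding deg_less_def by (auto simp: add.commute)
  then show ?thesis using that s(1) by blast
qed

lemma ex_deg_less:
  assumes "u \<in> A"
  obtains k where "u \<in> deg_less k"
proof -
  obtain N where "u = (\<Sum>j<N. coeff u j * x ^ j)" using ore_expansion[OF assms] .
  then show ?thesis using that coeff_in_S[OF assms] unfolding deg_less_def by blast
qed

lemma coeff_monomial_add_deg_less:
  assumes "c \<in> S" "v \<in> deg_less k"
  shows "coeff (c * x ^ k + v) k = c"
proof -
  from assms(2) obtain s where s: "\<forall>j. s j \<in> S" "v = (\<Sum>j<k. s j * x ^ j)"
    unfolding deg_less_def by blast
  have "c * x ^ k + v = (\<Sum>j<Suc k. (s(k := c)) j * x ^ j)"
    using s by (simp add: add.commute)
  moreover have "(s(k := c)) j \<in> S" for j using s(1) assms(1) by simp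
  ultimately show ?thesis using coeff_sum[of "s(k := c)" "Suc k" k] by (simp add: add.commute)
qed

lemma deg_less_mult_x_power: "u \<in> deg_less k \<Longrightarrow> u * x ^ n \<in> deg_less (k + n)"
proof (induction k arbitrary: u)
  case 0
  then show ?case using deg_less_0 zero_in_deg_less by simp
next
  case (Suc k)
  from deg_less_SucE[OF Suc.prems] obtain c v where cv: "c \<in> S" "v \<in> deg_less k" "u = c * x ^ k + v" .
  have "c * x ^ (k + n) \<in> deg_less (Suc k + n)" using monomial_in_deg_less[OF cv(1)] by simp
  moreover have "v * x ^ n \<in> deg_less (Suc k + n)" using deg_less_mono[OF _ Suc.IH[OF cv(2)]] by simp
  ultimately show ?case using cv(3) deg_less_add by (simp add: distrib_right mult.assoc power_add)
qed

lemma x_mult_deg_less: "u \<in> deg_less k \<Longrightarrow> x * u \<in> deg_less (Suc k)"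
proof (induction k arbitrary: u)
  case 0
  then show ?case using deg_less_0 zero_in_deg_less by simp
next
  case (Suc k)
  from deg_less_SucE[OF Suc.prems] obtain c v where cv: "c \<in> S" "v \<in> deg_less k" "u = c * x ^ k + v" .
  have "x * u = \<alpha> c * x ^ Suc k + \<delta> c * x ^ k + x * v"
    using cv x_mult[OF cv(1)] by (simp add: distrib_left distrib_right mult.assoc flip: mult.assoc[of x c])
  moreover have "\<alpha> c * x ^ Suc k \<in> deg_less (Suc (Suc k))" "\<delta> c * x ^ k \<in> deg_less (Suc (Suc k))"
    using monomial_in_deg_less[OF bij_betw_apply[OF bij_\<alpha> cv(1)], of "Suc k"]
      monomial_in_deg_less[OF \<delta>_in_S[OF cv(1)], of k] by simp_all
  moreover have "x * v \<in> deg_less (Suc (Suc k))" using deg_less_mono[OF _ Suc.IH[OF cv(2)]] by simp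
  ultimately show ?case using deg_less_add by simp
qed

lemma x_power_mult_deg_less: "u \<in> deg_less k \<Longrightarrow> x ^ m * u \<in> deg_less (k + m)"
  by (induction m) (auto simp: mult.assoc dest: x_mult_deg_less)

lemma deg_less_mult: "u \<in> deg_less k \<Longrightarrow> w \<in> deg_less (Suc n) \<Longrightarrow> u * w \<in> deg_less (k + n)"
proof (induction k arbitrary: u)
  case 0
  then show ?case using deg_less_0 zero_in_deg_less by simp
next
  case (Suc k)
  from deg_less_SucE[OF Suc.prems(1)] obtain c v where cv: "c \<in> S" "v \<in> deg_less k" "u = c * x ^ k + v" .
  have "c * (x ^ k * w) \<in> deg_less (Suc k + n)"
    using deg_less_left_mult[OF cv(1) x_power_mult_deg_less[OF Suc.prems(2), of k]] by (simp add: add.commute)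
  moreover have "v * w \<in> deg_less (Suc k + n)" using deg_less_mono[OF _ Suc.IH[OF cv(2) Suc.prems(2)]] by simp
  ultimately show ?case using cv(3) deg_less_add by (simp add: distrib_right mult.assoc)
qed

lemma x_power_mult_commute:
  assumes "c \<in> S"
  obtains w where "w \<in> deg_less k" "x ^ k * c = (\<alpha> ^^ k) c * x ^ k + w"
proof -
  have "\<exists>w\<in>deg_less k. x ^ k * c = (\<alpha> ^^ k) c * x ^ k + w"
  proof (induction k)
    case 0
    then show ?case using zero_in_deg_less by simp
  next
    case (Suc k)
    then obtain w where w: "w \<in> deg_less k" "x ^ k * c = (\<alpha> ^^ k) c * x ^ k + w" by blast
    have a: "(\<alpha> ^^ k) c \<in> S" using \<alpha>_funpow_in_S assms by blast
    have "x ^ Suc k * c = (x * (\<alpha> ^^ k) c) * x ^ k + x * w"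
      using w(2) by (simp add: distrib_left mult.assoc)
    also have "\<dots> = (\<alpha> ^^ Suc k) c * x ^ Suc k + (\<delta> ((\<alpha> ^^ k) c) * x ^ k + x * w)"
      using x_mult[OF a] by (simp add: distrib_right mult.assoc)
    finally show ?case
      using deg_less_add monomial_in_deg_less[OF \<delta>_in_S[OF a]] x_mult_deg_less[OF w(1)] by auto
  qed
  then show ?thesis using that by blast
qed

lemma ore_lc_in_S: "g \<in> A \<Longrightarrow> ore_lc S x g \<in> S"
  using coeff_in_S unfolding ore_lc_def coeff_def .

lemma ore_lc_decomposition:
  assumes g: "g \<in> A" "g \<noteq> 0"
  shows "ore_lc S x g \<noteq> 0"
    and "\<exists>g'\<in>deg_less (ore_deg S x g). g = ore_lc S x g * x ^ ore_deg S x g + g'"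
proof -
  obtain N where N: "\<forall>n\<ge>N. coeff g n = 0" and g_sum: "g = (\<Sum>j<N. coeff g j * x ^ j)"
    using ore_expansion[OF g(1)] .
  define d where "d = ore_deg S x g"
  have d: "d = (GREATEST n. coeff g n \<noteq> 0)" unfolding d_def ore_deg_def coeff_def ..
  have bound: "n \<le> N" if "coeff g n \<noteq> 0" for n
    using N that by (cases "N \<le> n") auto
  have "\<exists>j. coeff g j \<noteq> 0"
  proof (rule ccontr)
    assume "\<nexists>j. coeff g j \<noteq> 0"
    then have "g = 0" using g_sum by simp
    then show False using g(2) by simp
  qed
  then obtain j where j: "coeff g j \<noteq> 0" ..
  have lc: "coeff g d \<noteq> 0"
    unfolding d by (rule GreatestI_nat[where P = "\<lambda>n. coeff g n \<noteq> 0", OF j bound])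
  have above_d: "coeff g n = 0" if "d < n" for n
  proof (rule ccontr)
    assume "coeff g n \<noteq> 0"
    then have "n \<le> d"
      unfolding d by (rule Greatest_le_nat[where P = "\<lambda>n. coeff g n \<noteq> 0", OF _ bound])
    then show False using that by simp
  qed
  have "d < N" using N lc not_less by blast
  then have "g = (\<Sum>j<Suc d. coeff g j * x ^ j)"
    using g_sum above_d by (intro trans[OF g_sum] sum.mono_neutral_right) auto
  then have "g = coeff g d * x ^ d + (\<Sum>j<d. coeff g j * x ^ j)" by (simp add: add.commute)
  moreover have "(\<Sum>j<d. coeff g j * x ^ j) \<in> deg_less d"
    unfolding deg_less_def using coeff_in_S[OF g(1)] by blast
  moreover have lc_eq: "ore_lc S x g = coeff g d" unfolding ore_lc_def coeff_def d_def ..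
  ultimately show "\<exists>g'\<in>deg_less (ore_deg S x g). g = ore_lc S x g * x ^ ore_deg S x g + g'"
    unfolding d_def by auto
  show "ore_lc S x g \<noteq> 0" using lc lc_eq by simp
qed

lemma coeff_mult_top:
  assumes q: "q \<in> S" and f': "f' \<in> deg_less k" and p: "p \<in> S" and g': "g' \<in> deg_less n"
  shows "coeff ((q * x ^ k + f') * (p * x ^ n + g')) (k + n) = q * (\<alpha> ^^ k) p"
proof -
  define g where "g = p * x ^ n + g'"
  have g: "g \<in> deg_less (Suc n)"
    unfolding g_def using deg_less_add monomial_in_deg_less[OF p] deg_less_mono[OF _ g'] by simp
  obtain w where w: "w \<in> deg_less k" "x ^ k * p = (\<alpha> ^^ k) p * x ^ k + w"
    using x_power_mult_commute[OF p] .
  define V where "V = q * (w * x ^ n) + q * (x ^ k * g') + f' * g"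
  have "q * (w * x ^ n) \<in> deg_less (k + n)"
    using deg_less_left_mult[OF q deg_less_mult_x_power[OF w(1)]] .
  moreover have "q * (x ^ k * g') \<in> deg_less (k + n)"
    using deg_less_left_mult[OF q x_power_mult_deg_less[OF g', of k]] by (simp add: add.commute)
  moreover have "f' * g \<in> deg_less (k + n)" using deg_less_mult[OF f' g] .
  ultimately have "V \<in> deg_less (k + n)" unfolding V_def using deg_less_add by blast
  moreover have "(q * x ^ k + f') * g = (q * (\<alpha> ^^ k) p) * x ^ (k + n) + V"
    unfolding V_def g_def
    by (simp add: w(2) distrib_left distrib_right mult.assoc power_add add.assoc
        flip: mult.assoc[of "x ^ k" p])
  moreover have "q * (\<alpha> ^^ k) p \<in> S" using subring_mult[OF subring_S q \<alpha>_funpow_in_S[OF p]] .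
  ultimately show ?thesis unfolding g_def using coeff_monomial_add_deg_less by metis
qed

lemma ann_deg_less_subset_lspan:
  assumes RS: "R \<subseteq> S" and g: "g \<in> A" "g \<noteq> 0"
    and ann_lc: "ann S (ore_lc S x g) = lspan S (ann R g)"
  shows "f \<in> deg_less k \<Longrightarrow> f * g = 0 \<Longrightarrow> f \<in> lspan A (ann R g)"
proof (induction k arbitrary: f)
  case 0
  then show ?case using deg_less_0 lspan_zero by auto
next
  case (Suc k)
  obtain q f' where q: "q \<in> S" and f': "f' \<in> deg_less k" and f: "f = q * x ^ k + f'"
    using deg_less_SucE[OF Suc.prems(1)] .
  have p: "ore_lc S x g \<in> S" using ore_lc_in_S[OF g(1)] .
  obtain g' where g': "g' \<in> deg_less (ore_deg S x g)"
    and g_eq: "g = ore_lc S x g * x ^ ore_deg S x g + g'"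
    using ore_lc_decomposition(2)[OF g] by blast
  have "q * (\<alpha> ^^ k) (ore_lc S x g) = 0"
    using coeff_mult_top[OF q f' p g'] Suc.prems(2) coeff_zero unfolding f by (metis g_eq)
  moreover obtain q' where q': "q' \<in> S" "(\<alpha> ^^ k) q' = q"
    using q \<alpha>_funpow_bij by (metis bij_betw_imp_surj_on imageE)
  ultimately have "(\<alpha> ^^ k) (q' * ore_lc S x g) = (\<alpha> ^^ k) 0"
    using \<alpha>_funpow_mult[OF q'(1) p] \<alpha>_funpow_zero by simp
  then have "q' * ore_lc S x g = 0"
    using bij_betw_imp_inj_on[OF \<alpha>_funpow_bij] subring_mult[OF subring_S q'(1) p]
      subring_zero[OF subring_S] by (auto dest: inj_onD)
  then have "q' \<in> lspan S (ann R g)" using q'(1) ann_lc unfolding ann_def by blast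
  then have h: "x ^ k * q' \<in> lspan A (ann R g)"
    using lspan_left_mult[OF subring_A S_subset_A x_power_in_A] by blast
  then have "(x ^ k * q') * g = 0"
    using lspan_ann_subset[OF subring_A] RS S_subset_A unfolding ann_def by blast
  then have "(f - x ^ k * q') * g = 0" using Suc.prems(2) by (simp add: left_diff_distrib)
  moreover obtain w where "w \<in> deg_less k" "x ^ k * q' = q * x ^ k + w"
    using x_power_mult_commute[OF q'(1), where k = k] unfolding q'(2) .
  then have "f - x ^ k * q' \<in> deg_less k" using deg_less_diff[OF f'] unfolding f by simp
  ultimately have "f - x ^ k * q' \<in> lspan A (ann R g)" using Suc.IH by blast
  then show ?case using lspan_add[OF _ h] by fastforce
qed

theorem ann_ore_ext_eq_lspan:
  assumes "R \<subseteq> S" "g \<in> A" "g \<noteq> 0" "ann R (ore_lc S x g) = ann R g"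
    "ann S (ore_lc S x g) = lspan S (ann R (ore_lc S x g))"
  shows "ann A g = lspan A (ann R g)"
proof -
  have "f \<in> lspan A (ann R g)" if f: "f \<in> A" and fg: "f * g = 0" for f
  proof -
    obtain k where "f \<in> deg_less k" using ex_deg_less[OF f] .
    then show ?thesis using ann_deg_less_subset_lspan[OF assms(1-3)] assms(4,5) fg by simp
  qed
  then show ?thesis
    using ann_eq_lspan_ann_iff[OF subring_A] assms(1) S_subset_A unfolding ann_def by blast
qed

end

section \<open>The R-basis of an Ore extension of a free extension of R\<close>

locale ore_over_free = ore +
  fixes R TS :: "'a set"
  assumes subring_R: "is_subring R" and R_subset_S: "R \<subseteq> S" and free_on_TS: "free_on R S TS"
begin

abbreviation ore_basis :: "'a set" where
  "ore_basis \<equiv> {l * x ^ n | l n. l \<in> TS}"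

abbreviation term_of :: "'a \<times> nat \<Rightarrow> 'a" where
  "term_of \<equiv> \<lambda>(l, n). l * x ^ n"

lemma TS_subset_S: "TS \<subseteq> S"
  using free_on_TS unfolding free_on_def by blast

lemma zero_notin_TS: "0 \<notin> TS"
proof
  assume "0 \<in> TS"
  define c where "c = (\<lambda>b::'a. if b = 0 then (1::'a) else 0)"
  have "is_coeffs R TS c" unfolding is_coeffs_def c_def using \<open>0 \<in> TS\<close> subring_one[OF subring_R] by auto
  moreover have "lin_comb c = 0" by (subst lin_comb_eq_sum[of "{0}"]) (auto simp: c_def)
  ultimately have "c = (\<lambda>_. 0)"
    using free_on_TS is_coeffs_zero lin_comb_zero unfolding free_on_def by metis
  then show False using one_neq_zero unfolding c_def by metis
qed

lemma coeff_monomial: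
  assumes "l \<in> S"
  shows "coeff (l * x ^ n) j = (if j = n then l else 0)"
proof -
  define t where "t = (\<lambda>i. if i = n then l else 0)"
  have "(\<Sum>i<Suc n. t i * x ^ i) = l * x ^ n"
    by (simp add: t_def)
  moreover have "t i \<in> S" for i using assms subring_zero[OF subring_S] by (simp add: t_def)
  ultimately show ?thesis using coeff_sum[of t "Suc n" j] by (auto simp: t_def)
qed

lemma inj_on_term_of: "inj_on term_of (TS \<times> UNIV)"
proof (rule inj_onI, clarsimp)
  fix l n l' m assume l: "l \<in> TS" "l' \<in> TS" and eq: "l * x ^ n = l' * x ^ m"
  have "l = coeff (l' * x ^ m) n" using coeff_monomial[of l n n] l TS_subset_S eq by auto
  then have "l = (if n = m then l' else 0)" using coeff_monomial l TS_subset_S by auto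
  then show "l = l' \<and> n = m" using zero_notin_TS l(1) by (auto split: if_splits)
qed

lemma lin_comb_ore_basis:
  assumes L: "finite L" "L \<subseteq> TS" and supp: "{b. c b \<noteq> 0} \<subseteq> term_of ` (L \<times> {..<N})"
  shows "lin_comb c = (\<Sum>n<N. (\<Sum>l\<in>L. c (l * x ^ n) * l) * x ^ n)"
proof -
  have inj: "inj_on term_of (L \<times> {..<N})" using inj_on_subset[OF inj_on_term_of] L(2) by blast
  have "lin_comb c = (\<Sum>b\<in>term_of ` (L \<times> {..<N}). c b * b)"
    by (rule lin_comb_eq_sum) (use L supp in auto)
  also have "\<dots> = (\<Sum>(l, n)\<in>L \<times> {..<N}. c (l * x ^ n) * (l * x ^ n))"
    by (subst sum.reindex[OF inj]) (simp add: case_prod_beta)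
  also have "\<dots> = (\<Sum>l\<in>L. \<Sum>n<N. c (l * x ^ n) * (l * x ^ n))"
    by (rule sum.cartesian_product[symmetric])
  also have "\<dots> = (\<Sum>n<N. (\<Sum>l\<in>L. c (l * x ^ n) * l) * x ^ n)"
    by (subst sum.swap) (simp add: sum_distrib_right mult.assoc)
  finally show ?thesis .
qed

lemma ore_basis_support:
  assumes "is_coeffs R ore_basis c"
  obtains L N where "finite L" "L \<subseteq> TS" "{b. c b \<noteq> 0} \<subseteq> term_of ` (L \<times> {..<N})"
proof -
  have "ore_basis = term_of ` (TS \<times> UNIV)" by (auto simp: image_iff)
  then have "finite {b. c b \<noteq> 0}" "{b. c b \<noteq> 0} \<subseteq> term_of ` (TS \<times> UNIV)"
    using assms unfolding is_coeffs_def by auto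
  then obtain E where E: "E \<subseteq> TS \<times> UNIV" "finite E" "{b. c b \<noteq> 0} = term_of ` E"
    by (rule finite_subset_image[elim_format]) blast
  obtain N where N: "\<forall>n\<in>snd ` E. n < N"
    using finite_nat_set_iff_bounded E(2) by blast
  have "E \<subseteq> fst ` E \<times> {..<N}"
  proof
    fix z assume "z \<in> E"
    then show "z \<in> fst ` E \<times> {..<N}" using N by (simp add: mem_Times_iff)
  qed
  then have "{b. c b \<noteq> 0} \<subseteq> term_of ` (fst ` E \<times> {..<N})"
    unfolding E(3) by (rule image_mono)
  moreover have "fst ` E \<subseteq> TS" using E(1) by auto
  ultimately show ?thesis using that E(2) by blast
qed

lemma coeff_ore_basis:
  assumes c: "is_coeffs R ore_basis c" and l: "l \<in> TS"
  shows "c (l * x ^ n) = coef R TS (coeff (lin_comb c) n) l"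
proof -
  obtain L0 N0 where L0: "finite L0" "L0 \<subseteq> TS"
    and supp0: "{b. c b \<noteq> 0} \<subseteq> term_of ` (L0 \<times> {..<N0})"
    using ore_basis_support[OF c] .
  define L where "L = insert l L0"
  define N where "N = max N0 (Suc n)"
  have L: "finite L" "L \<subseteq> TS" "l \<in> L" using L0 l unfolding L_def by auto
  have "L0 \<times> {..<N0} \<subseteq> L \<times> {..<N}" unfolding L_def N_def by auto
  then have supp: "{b. c b \<noteq> 0} \<subseteq> term_of ` (L \<times> {..<N})" using supp0 by blast
  have c_in_R: "c b \<in> R" for b
    using c subring_zero[OF subring_R] unfolding is_coeffs_def by (cases "c b = 0") auto
  have "coeff (lin_comb c) n = (\<Sum>l'\<in>L. c (l' * x ^ n) * l')"
  proof -
    have "(\<Sum>l'\<in>L. c (l' * x ^ j) * l') \<in> S" for j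
      using c_in_R R_subset_S L(2) TS_subset_S
      by (auto intro!: subring_sum[OF subring_S] subring_mult[OF subring_S])
    then show ?thesis
      using coeff_sum lin_comb_ore_basis[OF L(1,2) supp] by (simp add: N_def)
  qed
  then show ?thesis using coef_sum_basis[OF free_on_TS L(1,2)] c_in_R L(3) by simp
qed

lemma ore_basis_spans:
  assumes g: "g \<in> A"
  shows "g \<in> lin_combs R ore_basis"
proof -
  obtain N where g_sum: "g = (\<Sum>j<N. coeff g j * x ^ j)" using ore_expansion[OF g] .
  have "coeff g j * x ^ j \<in> lin_combs R ore_basis" for j
  proof -
    define e where "e = coef R TS (coeff g j)"
    have e: "is_coeffs R TS e" "coeff g j = lin_comb e"
      unfolding e_def using free_on_coef[OF free_on_TS coeff_in_S[OF g]] by auto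
    have "e l * (l * x ^ j) \<in> lin_combs R ore_basis" if "l \<in> {l. e l \<noteq> 0}" for l
    proof (rule mult_basis_in_lin_combs)
      show "e l \<in> R" "l * x ^ j \<in> ore_basis" using e(1) that unfolding is_coeffs_def by auto
    qed
    then have "(\<Sum>l\<in>{l. e l \<noteq> 0}. e l * (l * x ^ j)) \<in> lin_combs R ore_basis"
      by (rule sum_in_lin_combs[OF subring_R])
    then show ?thesis
      unfolding e(2) lin_comb_def by (simp add: sum_distrib_right mult.assoc)
  qed
  then show ?thesis by (subst g_sum) (rule sum_in_lin_combs[OF subring_R])
qed

lemma free_on_ore_basis: "free_on R A ore_basis"
proof -
  have "lin_combs R ore_basis \<subseteq> A"
  proof
    fix m assume "m \<in> lin_combs R ore_basis"
    then obtain c where c: "is_coeffs R ore_basis c" "m = lin_comb c"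
      unfolding lin_combs_def by blast
    have "c b * b \<in> A" if nonzero: "c b \<noteq> 0" for b
    proof -
      obtain l n where "c b \<in> R" "l \<in> TS" "b = l * x ^ n"
        using c(1) nonzero unfolding is_coeffs_def by blast
      then show ?thesis using R_subset_S S_subset_A TS_subset_S
        by (auto intro!: subring_mult[OF subring_A] x_power_in_A)
    qed
    then show "m \<in> A" unfolding c(2) lin_comb_def by (auto intro!: subring_sum[OF subring_A])
  qed
  then have A: "A = lin_combs R ore_basis" using ore_basis_spans by blast
  have unique: "c = c'"
    if c: "is_coeffs R ore_basis c" "is_coeffs R ore_basis c'" "lin_comb c = lin_comb c'" for c c'
  proof
    fix b show "c b = c' b"
    proof (cases "b \<in> ore_basis")
      case True
      then obtain l n where "l \<in> TS" "b = l * x ^ n" by blast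
      then show ?thesis using coeff_ore_basis[OF c(1)] coeff_ore_basis[OF c(2)] c(3) by simp
    next
      case False
      then have "c b = 0" "c' b = 0" using c(1,2) unfolding is_coeffs_def by meson+
      then show ?thesis by simp
    qed
  qed
  have "ore_basis \<subseteq> A"
    using TS_subset_S S_subset_A by (auto intro!: subring_mult[OF subring_A] x_power_in_A)
  with A unique show ?thesis unfolding free_on_def lin_combs_def by blast
qed

lemma coef_ore_basis:
  assumes "g \<in> A" "l \<in> TS"
  shows "coef R ore_basis g (l * x ^ n) = coef R TS (coeff g n) l"
  using coeff_ore_basis[OF free_on_coef(1)[OF free_on_ore_basis assms(1)] assms(2)]
    free_on_coef(2)[OF free_on_ore_basis assms(1), symmetric] by simp

theorem nice_ore_lc:
  assumes g: "g \<in> A" and nice_g: "nice R A ore_basis g"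
  shows "nice R S TS (ore_lc S x g)" and "ann R (ore_lc S x g) = ann R g"
proof -
  define p where "p = ore_lc S x g"
  define d where "d = ore_deg S x g"
  have "g \<noteq> 0" using nice_g unfolding nice_def by blast
  then have p: "p \<in> S" "p \<noteq> 0"
    unfolding p_def using ore_lc_in_S[OF g] ore_lc_decomposition(1)[OF g] by auto
  have in_TS: "l \<in> TS" if "coef R TS p l \<noteq> 0" for l
    using free_on_coef(1)[OF free_on_TS p(1)] that unfolding is_coeffs_def by blast
  have coef_p: "coef R TS p l = coef R ore_basis g (l * x ^ d)" if "coef R TS p l \<noteq> 0" for l
    using coef_ore_basis[OF g in_TS[OF that]] unfolding p_def d_def ore_lc_def coeff_def by simp
  show nice_p: "nice R S TS p"
    unfolding nice_def
  proof (intro conjI allI impI)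
    fix l l' assume l: "coef R TS p l \<noteq> 0" and l': "coef R TS p l' \<noteq> 0"
    then have "coef R ore_basis g (l * x ^ d) \<noteq> 0" "coef R ore_basis g (l' * x ^ d) \<noteq> 0"
      using coef_p[OF l] coef_p[OF l'] by simp_all
    then have "ann R (coef R ore_basis g (l * x ^ d)) = ann R (coef R ore_basis g (l' * x ^ d))"
      using nice_g unfolding nice_def by blast
    then show "ann R (coef R TS p l) = ann R (coef R TS p l')"
      using coef_p[OF l] coef_p[OF l'] by simp
  qed (use p in auto)
  obtain l where l: "coef R TS p l \<noteq> 0" using nice_coef_nonzero[OF free_on_TS nice_p] .
  have "ann R p = ann R (coef R TS p l)"
    using ann_nice_eq_ann_coef[OF subring_R free_on_TS nice_p l] .
  also have "\<dots> = ann R g"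
    using ann_nice_eq_ann_coef[OF subring_R free_on_ore_basis nice_g] l coef_p[OF l] by simp
  finally show "ann R p = ann R g" .
qed

end

section \<open>Skew polynomial rings over well-ordered variables\<close>

lemma one_in_std_terms: "1 \<in> std_terms x D"
  unfolding std_terms_def by (rule CollectI, rule exI[of _ "[]"]) simp

lemma std_terms_mono: "D \<subseteq> D' \<Longrightarrow> std_terms x D \<subseteq> std_terms x D'"
  unfolding std_terms_def by blast

lemma std_terms_le:
  fixes x :: "'i::linorder \<Rightarrow> 'a::ring_1"
  shows "std_terms x {s. s \<le> k} = {l * x k ^ n | l n. l \<in> std_terms x {s. s < k}}"
proof (intro set_eqI iffI)
  fix y assume "y \<in> std_terms x {s. s \<le> k}"
  then obtain ys where ys: "y = prod_list (map x ys)" "sorted ys" "set ys \<subseteq> {s. s \<le> k}"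
    unfolding std_terms_def by blast
  define xs where "xs = takeWhile (\<lambda>s. s < k) ys"
  define zs where "zs = dropWhile (\<lambda>s. s < k) ys"
  have yxz: "ys = xs @ zs" unfolding xs_def zs_def by simp
  have zk: "\<forall>z\<in>set zs. z = k"
  proof (cases "zs = []")
    case False
    then obtain z0 zr where zc: "zs = z0 # zr" by (cases zs) auto
    have "\<not> z0 < k" using hd_dropWhile[of "\<lambda>s. s < k" ys] False zc unfolding zs_def by simp
    moreover have "sorted zs" unfolding zs_def using sorted_dropWhile[OF ys(2)] .
    moreover have "set zs \<subseteq> {s. s \<le> k}" using ys(3) unfolding zs_def by (meson set_dropWhileD subset_iff)
    ultimately show ?thesis using zc by (auto simp: not_less intro!: order.antisym)
  qed simp
  then have "zs = replicate (length zs) k" by (simp add: replicate_length_same)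
  then have "y = prod_list (map x xs) * x k ^ length zs"
    using ys(1) yxz by (metis map_append map_replicate prod_list.append prod_list_replicate)
  moreover have "prod_list (map x xs) \<in> std_terms x {s. s < k}"
    unfolding std_terms_def xs_def using sorted_takeWhile[OF ys(2)]
    by (auto dest: set_takeWhileD)
  ultimately show "y \<in> {l * x k ^ n | l n. l \<in> std_terms x {s. s < k}}" by blast
next
  fix y assume "y \<in> {l * x k ^ n | l n. l \<in> std_terms x {s. s < k}}"
  then obtain xs n where xs: "y = prod_list (map x xs) * x k ^ n" "sorted xs" "set xs \<subseteq> {s. s < k}"
    unfolding std_terms_def by blast
  define ys where "ys = xs @ replicate n k"
  have "sorted ys" unfolding ys_def using xs(2,3) by (auto simp: sorted_append)
  moreover have "set ys \<subseteq> {s. s \<le> k}" unfolding ys_def using xs(3) by auto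
  moreover have "y = prod_list (map x ys)" unfolding ys_def using xs(1) by simp
  ultimately show "y \<in> std_terms x {s. s \<le> k}" unfolding std_terms_def by blast
qed

locale skew_poly =
  fixes R :: "'a::ring_1 set" and x :: "'i::wellorder \<Rightarrow> 'a" and \<alpha> \<delta> :: "'i \<Rightarrow> 'a \<Rightarrow> 'a"
    and Sk :: "'i set \<Rightarrow> 'a set"
  assumes skew_setting: "skew_setting R x \<alpha> \<delta> Sk"
begin

lemma subring_R: "is_subring R"
  and subring_UNIV: "is_subring (Sk UNIV)"
  and Sk_empty: "Sk {} = R"
  and free_on_less: "\<And>k. free_on R (Sk {s. s < k}) (std_terms x {s. s < k})"
  and free_on_UNIV: "free_on R (Sk UNIV) (std_terms x UNIV)"
  and ore_ext_le: "\<And>k. ore_ext (Sk {s. s < k}) (Sk {s. s \<le> k}) (x k) (\<alpha> k) (\<delta> k)"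
  and Sk_limit: "\<And>k. (\<exists>\<eta>. \<eta> < k) \<Longrightarrow> (\<forall>\<eta><k. \<exists>\<eta>'<k. \<eta> < \<eta>') \<Longrightarrow>
      Sk {s. s < k} = (\<Union>\<eta>\<in>{\<eta>. \<eta> < k}. Sk {s. s < \<eta>})"
  and Sk_UNIV_limit: "(\<forall>\<eta>::'i. \<exists>\<eta>'. \<eta> < \<eta>') \<Longrightarrow> Sk UNIV = (\<Union>\<eta>. Sk {s. s < \<eta>})"
  using skew_setting unfolding skew_setting_def by auto

lemma R_subset_Sk_less: "R \<subseteq> Sk {s. s < k}"
  using subset_free_on_if_one_in_basis[OF free_on_less one_in_std_terms] .

lemma ore_over_free_le:
  "ore_over_free (Sk {s. s < k}) (Sk {s. s \<le> k}) (x k) (\<alpha> k) (\<delta> k) R (std_terms x {s. s < k})"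
  using ore_ext_le[of k] subring_R R_subset_Sk_less free_on_less[of k] by unfold_locales auto

lemma zero_succ_limit_cases:
  fixes k :: 'i
  obtains (zero) "\<not> (\<exists>\<eta>. \<eta> < k)"
    | (succ) \<eta> where "\<eta> < k" "{s. s < k} = {s. s \<le> \<eta>}"
    | (limit) "\<exists>\<eta>. \<eta> < k" "\<forall>\<eta><k. \<exists>\<eta>'<k. \<eta> < \<eta>'"
proof (cases "\<exists>\<eta><k. \<forall>\<eta>'<k. \<eta>' \<le> \<eta>")
  case True
  then obtain \<eta> where "\<eta> < k" "\<forall>\<eta>'<k. \<eta>' \<le> \<eta>" by blast
  moreover then have "{s. s < k} = {s. s \<le> \<eta>}" using le_less_trans by blast
  ultimately show ?thesis using succ by blast
next
  case False
  then show ?thesis using zero limit by (meson not_le)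
qed

lemma Sk_less_mono: "\<eta> \<le> k \<Longrightarrow> Sk {s. s < \<eta>} \<subseteq> Sk {s. s < k}"
proof (induction k arbitrary: \<eta> rule: less_induct)
  case (less k)
  show ?case
  proof (cases "\<eta> = k")
    case False
    then have "\<eta> < k" using less.prems by simp
    then show ?thesis
    proof (cases k rule: zero_succ_limit_cases)
      case (succ k')
      then have "Sk {s. s < \<eta>} \<subseteq> Sk {s. s < k'}" using less.IH \<open>\<eta> < k\<close> by blast
      also have "\<dots> \<subseteq> Sk {s. s \<le> k'}" using ore_ext_le[of k'] unfolding ore_ext_def by blast
      finally show ?thesis using succ(2) by simp
    next
      case limit
      then show ?thesis using Sk_limit[of k] \<open>\<eta> < k\<close> by blast
    qed blast
  qed simp
qed

definition nice_ann_generated :: "'a set \<Rightarrow> 'a set \<Rightarrow> bool" where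
  "nice_ann_generated M T \<longleftrightarrow> (\<forall>g. nice R M T g \<longrightarrow> ann M g = lspan M (ann R g))"

lemma nice_ann_generated_le:
  assumes "nice_ann_generated (Sk {s. s < k}) (std_terms x {s. s < k})"
  shows "nice_ann_generated (Sk {s. s \<le> k}) (std_terms x {s. s \<le> k})"
  unfolding nice_ann_generated_def
proof (intro allI impI)
  interpret ore_over_free "Sk {s. s < k}" "Sk {s. s \<le> k}" "x k" "\<alpha> k" "\<delta> k" R "std_terms x {s. s < k}"
    by (rule ore_over_free_le)
  fix g assume nice_g: "nice R (Sk {s. s \<le> k}) (std_terms x {s. s \<le> k}) g"
  then have g: "g \<in> Sk {s. s \<le> k}" "g \<noteq> 0" unfolding nice_def by auto
  have "nice R (Sk {s. s \<le> k}) ore_basis g" using nice_g unfolding std_terms_le .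
  from nice_ore_lc[OF g(1) this] assms
  show "ann (Sk {s. s \<le> k}) g = lspan (Sk {s. s \<le> k}) (ann R g)"
    using ann_ore_ext_eq_lspan[OF R_subset_S g] unfolding nice_ann_generated_def by metis
qed

lemma nice_ann_generated_directed_union:
  assumes M: "is_subring M" "R \<subseteq> M" "free_on R M T"
    and cover: "\<forall>m\<in>M. \<exists>\<eta>\<in>I. m \<in> Sk {s. s < \<eta>}"
    and directed: "\<forall>\<eta>1\<in>I. \<forall>\<eta>2\<in>I. max \<eta>1 \<eta>2 \<in> I"
    and below: "\<forall>\<eta>\<in>I. Sk {s. s < \<eta>} \<subseteq> M \<and> std_terms x {s. s < \<eta>} \<subseteq> T"
    and IH: "\<forall>\<eta>\<in>I. nice_ann_generated (Sk {s. s < \<eta>}) (std_terms x {s. s < \<eta>})"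
  shows "nice_ann_generated M T"
  unfolding nice_ann_generated_def
proof (intro allI impI)
  fix g assume nice_g: "nice R M T g"
  have "f \<in> lspan M (ann R g)" if f: "f \<in> M" "f * g = 0" for f
  proof -
    have "g \<in> M" using nice_g unfolding nice_def by auto
    then obtain \<eta>1 \<eta>2 where \<eta>: "\<eta>1 \<in> I" "g \<in> Sk {s. s < \<eta>1}" "\<eta>2 \<in> I" "f \<in> Sk {s. s < \<eta>2}"
      using cover f(1) by meson
    define \<eta> where "\<eta> = max \<eta>1 \<eta>2"
    have "\<eta> \<in> I" using directed \<eta> unfolding \<eta>_def by blast
    have "g \<in> Sk {s. s < \<eta>}" "f \<in> Sk {s. s < \<eta>}"
      using Sk_less_mono[of \<eta>1 \<eta>] Sk_less_mono[of \<eta>2 \<eta>] \<eta> unfolding \<eta>_def by auto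
    moreover from this have "nice R (Sk {s. s < \<eta>}) (std_terms x {s. s < \<eta>}) g"
      using nice_basis_mono[OF free_on_less M(3)] below \<open>\<eta> \<in> I\<close> nice_g by blast
    ultimately have "f \<in> lspan (Sk {s. s < \<eta>}) (ann R g)"
      using IH \<open>\<eta> \<in> I\<close> f(2) unfolding nice_ann_generated_def ann_def by blast
    then show ?thesis using lspan_mono below \<open>\<eta> \<in> I\<close> by blast
  qed
  then show "ann M g = lspan M (ann R g)"
    using ann_eq_lspan_ann_iff[OF M(1,2)] unfolding ann_def by blast
qed

lemma nice_ann_generated_less: "nice_ann_generated (Sk {s. s < k}) (std_terms x {s. s < k})"
proof (induction k rule: less_induct)
  case (less k)
  show ?case
  proof (cases k rule: zero_succ_limit_cases)
    case zero
    then have "{s. s < k} = {}" by auto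
    moreover have "ann R g \<subseteq> lspan R (ann R g)" for g
      using lspan_mult_mem[OF subring_one[OF subring_R], of _ "ann R g"] by auto
    ultimately show ?thesis
      using ann_eq_lspan_ann_iff[OF subring_R order_refl]
      unfolding nice_ann_generated_def by (simp add: Sk_empty)
  next
    case (succ k')
    then show ?thesis using nice_ann_generated_le[OF less.IH[OF succ(1)]] by simp
  next
    case limit
    show ?thesis
    proof (rule nice_ann_generated_directed_union[where I = "{\<eta>. \<eta> < k}"])
      show "is_subring (Sk {s. s < k})" using ore_ext_le[of k] unfolding ore_ext_def by blast
      show "\<forall>m\<in>Sk {s. s < k}. \<exists>\<eta>\<in>{\<eta>. \<eta> < k}. m \<in> Sk {s. s < \<eta>}"
        using Sk_limit[OF limit] by blast
      show "\<forall>\<eta>\<in>{\<eta>. \<eta> < k}. Sk {s. s < \<eta>} \<subseteq> Sk {s. s < k} \<and>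
          std_terms x {s. s < \<eta>} \<subseteq> std_terms x {s. s < k}"
        using Sk_less_mono std_terms_mono by (auto intro!: std_terms_mono)
    qed (use less.IH R_subset_Sk_less free_on_less in \<open>auto simp: max_def\<close>)
  qed
qed

theorem nice_ann_generated_UNIV: "nice_ann_generated (Sk UNIV) (std_terms x UNIV)"
proof (cases "\<exists>m::'i. \<forall>\<eta>. \<eta> \<le> m")
  case True
  then obtain m :: 'i where "{s. s \<le> m} = UNIV" by auto
  then show ?thesis using nice_ann_generated_le[OF nice_ann_generated_less[of m]] by metis
next
  case False
  then have unbounded: "\<forall>\<eta>::'i. \<exists>\<eta>'. \<eta> < \<eta>'" by (meson not_le)
  show ?thesis
  proof (rule nice_ann_generated_directed_union[where I = UNIV, OF subring_UNIV _ free_on_UNIV])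
    show "R \<subseteq> Sk UNIV" using subset_free_on_if_one_in_basis[OF free_on_UNIV one_in_std_terms] .
    show "\<forall>m\<in>Sk UNIV. \<exists>\<eta>\<in>UNIV. m \<in> Sk {s. s < \<eta>}" using Sk_UNIV_limit[OF unbounded] by blast
    have "Sk {s. s < \<eta>} \<subseteq> Sk UNIV" for \<eta> using Sk_UNIV_limit[OF unbounded] by blast
    then show "\<forall>\<eta>\<in>UNIV. Sk {s. s < \<eta>} \<subseteq> Sk UNIV \<and> std_terms x {s. s < \<eta>} \<subseteq> std_terms x UNIV"
      using std_terms_mono[of _ UNIV x] by blast
    show "\<forall>\<eta>\<in>UNIV. nice_ann_generated (Sk {s. s < \<eta>}) (std_terms x {s. s < \<eta>})"
      using nice_ann_generated_less by blast
  qed simp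
qed

end

theorem mainTheorem10:
  shows "(\<forall>(R::'a::ring_1 set) S TS A x \<alpha> \<delta> g.
            is_subring R \<and> is_subring S \<and> R \<subseteq> S \<and> free_on R S TS \<and> ore_ext S A x \<alpha> \<delta> \<and>
            g \<in> A \<and> g \<noteq> 0 \<and>
            nice R S TS (ore_lc S x g) \<and> ann R (ore_lc S x g) = ann R g \<and>
            ann S (ore_lc S x g) = lspan S (ann R (ore_lc S x g))
            \<longrightarrow> ann A g = lspan A (ann R g))
       \<and> (\<forall>(R::'a::ring_1 set) S TS A x \<alpha> \<delta> g.
            is_subring R \<and> is_subring S \<and> R \<subseteq> S \<and> free_on R S TS \<and> ore_ext S A x \<alpha> \<delta> \<and>
            g \<in> A \<and> nice R A {l * x ^ n | l n. l \<in> TS} g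
            \<longrightarrow> nice R S TS (ore_lc S x g) \<and> ann R (ore_lc S x g) = ann R g)
       \<and> (\<forall>(R::'a::ring_1 set) (x::'i::wellorder \<Rightarrow> 'a) \<alpha> \<delta> Sk g.
            skew_setting R x \<alpha> \<delta> Sk \<and> nice R (Sk UNIV) (std_terms x UNIV) g
            \<longrightarrow> ann (Sk UNIV) g = lspan (Sk UNIV) (ann R g))"
proof ((rule conjI[OF _ conjI]; intro allI impI), goal_cases)
  case (1 R S TS A x \<alpha> \<delta> g)
  interpret ore S A x \<alpha> \<delta> using 1 by (simp add: ore_def)
  show ?case using ann_ore_ext_eq_lspan 1 by blast
next
  case (2 R S TS A x \<alpha> \<delta> g)
  interpret ore_over_free S A x \<alpha> \<delta> R TS
    using 2 by (intro ore_over_free.intro ore.intro ore_over_free_axioms.intro) auto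
  show ?case using nice_ore_lc 2 by blast
next
  case (3 R x \<alpha> \<delta> Sk g)
  interpret skew_poly R x \<alpha> \<delta> Sk using 3 by (simp add: skew_poly_def)
  show ?case using nice_ann_generated_UNIV 3 unfolding nice_ann_generated_def by blast
qed

end
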